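(* Let $m\ge 4$ and let $K\ne\Delta_{[m]}$ be a simplicial complex on $[m]$. Then $\mathrm{Bier}(K)$ is chordal if and only if $K$ contains no edges or $K^\vee$ contains no edges.
   Context: A simplicial complex $K$ on $[m]=\{1,\dots,m\}$ is a nonempty family of subsets of $[m]$ closed under taking subsets; an edge is a face of cardinality $2$. $\Delta_{[m]}=2^{[m]}$. Let $[m']=\{1',\dots,m'\}$ be a disjoint copy of $[m]$, $I'=\{i':i\in I\}$. For $K\ne\Delta_{[m]}$ the Alexander dual $K^\vee$ is the complex on $[m']$ with $J'\in K^\vee$ iff $[m]\setminus J\notin K$. The Bier sphere $\mathrm{Bier}(K)$ is the complex on $[m]\sqcup[m']$ with faces $I\sqcup J'$, $I\in K$, $J'\in K^\vee$, $I\cap J=\varnothing$. A graph is chordal if it has no induced cycle of length greater than $3$; a simplicial complex is chordal if its 1-skeleton is a chordal graph. *)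

theory Defs
  imports Main
begin

definition simplicial_complex :: "nat \<Rightarrow> nat set set \<Rightarrow> bool" where
  "simplicial_complex m K \<longleftrightarrow>
     K \<noteq> {} \<and> (\<forall>\<sigma>\<in>K. \<sigma> \<subseteq> {1..m}) \<and> (\<forall>\<sigma>\<in>K. \<forall>\<tau>. \<tau> \<subseteq> \<sigma> \<longrightarrow> \<tau> \<in> K)"

definition full_simplex :: "nat \<Rightarrow> nat set set" where
  "full_simplex m = Pow {1..m}"

text \<open>Alexander dual, represented on the copy [m'] of [m] (identified with {1..m}
via J' \<leftrightarrow> J): J' is a face iff [m] - J is not a face of K.\<close>
definition alexander_dual :: "nat \<Rightarrow> nat set set \<Rightarrow> nat set set" where
  "alexander_dual m K = {J. J \<subseteq> {1..m} \<and> {1..m} - J \<notin> K}"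

text \<open>Bier sphere on [m] \<squnion> [m']: vertex i of [m] is Inl i, vertex i' of [m'] is Inr i.\<close>
definition bier :: "nat \<Rightarrow> nat set set \<Rightarrow> (nat + nat) set set" where
  "bier m K = {Inl ` I \<union> Inr ` J | I J. I \<in> K \<and> J \<in> alexander_dual m K \<and> I \<inter> J = {}}"

definition has_edge :: "'a set set \<Rightarrow> bool" where
  "has_edge X \<longleftrightarrow> (\<exists>\<sigma>\<in>X. card \<sigma> = 2)"

definition adjacent :: "'a set set \<Rightarrow> 'a \<Rightarrow> 'a \<Rightarrow> bool" where
  "adjacent X u v \<longleftrightarrow> u \<noteq> v \<and> {u, v} \<in> X"

definition induced_cycle :: "'a set set \<Rightarrow> 'a list \<Rightarrow> bool" where
  "induced_cycle X cs \<longleftrightarrow> length cs \<ge> 3 \<and> distinct cs \<and>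
     (\<forall>i<length cs. \<forall>j<length cs.
        adjacent X (cs!i) (cs!j) \<longleftrightarrow>
          (j = Suc i mod length cs \<or> i = Suc j mod length cs))"

definition chordal :: "'a set set \<Rightarrow> bool" where
  "chordal X \<longleftrightarrow> \<not> (\<exists>cs. induced_cycle X cs \<and> length cs > 3)"

end

theory Submission imports Defs begin

text \<open>Write L for the Alexander dual of K. In the 1-skeleton of Bier(K) the pairs ij of [m] span
  edges iff ij \<in> K, the pairs i'j' of [m'] iff ij \<in> L, and i is joined to j' iff i
  \<noteq> j and both are vertices. If K has no edges, then for m \<ge> 4 the complement of any
  pair contains an edge and so is not a face of K; hence every pair is a face of L, and the
  1-skeleton is a split graph (an independent set [m] plus a clique [m']), which is chordal. The
  case without edges in L is symmetric. Conversely, given an edge of K and an edge of L, a case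
  analysis on how they meet always yields an induced 4-cycle; in the hardest case a fourth
  vertex, available since m \<ge> 4, is needed.\<close>

lemma has_edge_iff: "has_edge X \<longleftrightarrow> (\<exists>x y. x \<noteq> y \<and> {x, y} \<in> X)"
  unfolding has_edge_def by (metis card_2_iff)

lemma pair_notin_if_not_has_edge: "\<not> has_edge X \<Longrightarrow> x \<noteq> y \<Longrightarrow> {x, y} \<notin> X"
  using has_edge_iff by blast

lemma adjacent_commute: "adjacent X u v \<longleftrightarrow> adjacent X v u"
  by (auto simp: adjacent_def insert_commute)

lemma not_chordal_if_induced_square:
  assumes "distinct [a, b, c, d]"
    and "adjacent X a b" "adjacent X b c" "adjacent X c d" "adjacent X d a"
    and "\<not> adjacent X a c" "\<not> adjacent X b d"
  shows "\<not> chordal X"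
proof -
  have "induced_cycle X [a, b, c, d]"
    using assms adjacent_commute[of X] unfolding induced_cycle_def
    by (auto simp: less_Suc_eq adjacent_def)
  then show ?thesis unfolding chordal_def by fastforce
qed

definition split_clique :: "'a set set \<Rightarrow> 'a set \<Rightarrow> bool" where
  "split_clique X C \<longleftrightarrow>
     (\<forall>u v. adjacent X u v \<longrightarrow> u \<in> C \<or> v \<in> C) \<and> (\<forall>u\<in>C. \<forall>v\<in>C. u \<noteq> v \<longrightarrow> adjacent X u v)"

lemma split_clique_mem_if_neighbours_nonadjacent:
  assumes "split_clique X C" "adjacent X u v" "adjacent X u w" "v \<noteq> w" "\<not> adjacent X v w"
  shows "u \<in> C"
  using assms unfolding split_clique_def by blast

lemma chordal_if_split_clique:
  assumes split: "split_clique X C"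
  shows "chordal X"
  unfolding chordal_def
proof
  assume "\<exists>cs. induced_cycle X cs \<and> length cs > 3"
  then obtain cs where cyc: "induced_cycle X cs" and long: "length cs > 3" by blast
  define n where "n = length cs"
  have n: "n > 3" using long by (simp add: n_def)
  have adj: "adjacent X (cs!i) (cs!j) \<longleftrightarrow> j = Suc i mod n \<or> i = Suc j mod n"
    if "i < n" "j < n" for i j
    using cyc that unfolding induced_cycle_def n_def by blast
  have neq: "cs!i \<noteq> cs!j" if "i < n" "j < n" "i \<noteq> j" for i j
    using cyc that nth_eq_iff_index_eq unfolding induced_cycle_def n_def by blast
  have "cs!0 \<in> C"
    using n adj[of 0 1] adj[of 0 "n - 1"] adj[of 1 "n - 1"] neq[of 1 "n - 1"]
    by (intro split_clique_mem_if_neighbours_nonadjacent[OF split, of _ "cs!1" "cs!(n - 1)"])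
      auto
  moreover have "cs!2 \<in> C"
    using n adj[of 2 1] adj[of 2 3] adj[of 1 3] neq[of 1 3]
    by (intro split_clique_mem_if_neighbours_nonadjacent[OF split, of _ "cs!1" "cs!3"])
      (auto simp: mod_if)
  moreover have "\<not> adjacent X (cs!0) (cs!2)"
    using adj[of 0 2] n by simp
  ultimately show False
    using split neq[of 0 2] n unfolding split_clique_def by auto
qed

lemma card_atLeastAtMost_Diff_ge: "finite B \<Longrightarrow> m - card B \<le> card ({1..m::nat} - B)"
  using diff_card_le_card_Diff[of B "{1..m}"] by simp

lemma two_points_outside_pair:
  assumes "4 \<le> m"
  obtains x y where "x \<noteq> y" "x \<in> {1..m::nat} - {i, j}" "y \<in> {1..m} - {i, j}"
proof -
  have "card {i, j} \<le> 2" by (simp add: card_insert_if)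
  moreover have "m - card {i, j} \<le> card ({1..m} - {i, j})"
    by (rule card_atLeastAtMost_Diff_ge) simp
  ultimately have "\<not> card ({1..m} - {i, j}) \<le> Suc 0"
    using assms by linarith
  then obtain x y where "x \<in> {1..m} - {i, j}" "y \<in> {1..m} - {i, j}" "x \<noteq> y"
    using card_le_Suc0_iff_eq[of "{1..m} - {i, j}"] by blast
  then show ?thesis using that by blast
qed

lemma point_outside_triple:
  assumes "4 \<le> m"
  obtains e where "e \<in> {1..m::nat} - {x, y, z}"
proof -
  have "card {x, y, z} \<le> 3" by (simp add: card_insert_if)
  moreover have "m - card {x, y, z} \<le> card ({1..m} - {x, y, z})"
    by (rule card_atLeastAtMost_Diff_ge) simp
  ultimately have "card ({1..m} - {x, y, z}) \<noteq> 0"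
    using assms by linarith
  then show ?thesis using that by (metis card.empty ex_in_conv)
qed

lemma Inl_Inr_mem_bier_iff:
  "Inl ` I \<union> Inr ` J \<in> bier m K \<longleftrightarrow> I \<in> K \<and> J \<in> alexander_dual m K \<and> I \<inter> J = {}"
proof
  assume "Inl ` I \<union> Inr ` J \<in> bier m K"
  then obtain I' J' where eq: "Inl ` I \<union> Inr ` J = Inl ` I' \<union> Inr ` J'"
    and "I' \<in> K" "J' \<in> alexander_dual m K" "I' \<inter> J' = {}"
    unfolding bier_def by blast
  moreover from eq have "I = I'" "J = J'"
    by (auto simp: set_eq_iff image_iff)
  ultimately show "I \<in> K \<and> J \<in> alexander_dual m K \<and> I \<inter> J = {}" by simp
qed (auto simp: bier_def)

locale proper_complex =
  fixes m :: nat and K :: "nat set set"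
  assumes complex: "simplicial_complex m K" and proper: "K \<noteq> full_simplex m"
begin

abbreviation dual :: "nat set set" where
  "dual \<equiv> alexander_dual m K"

lemma face_subset: "\<sigma> \<in> K \<Longrightarrow> \<tau> \<subseteq> \<sigma> \<Longrightarrow> \<tau> \<in> K"
  using complex unfolding simplicial_complex_def by blast

lemma face_range: "\<sigma> \<in> K \<Longrightarrow> \<sigma> \<subseteq> {1..m}"
  using complex unfolding simplicial_complex_def by blast

lemma empty_face: "{} \<in> K"
proof -
  obtain \<sigma> where "\<sigma> \<in> K" using complex unfolding simplicial_complex_def by fast
  then show ?thesis using face_subset by blast
qed

lemma dual_face_subset: "J \<in> dual \<Longrightarrow> J' \<subseteq> J \<Longrightarrow> J' \<in> dual"
  unfolding alexander_dual_def using face_subset[of "{1..m} - J'" "{1..m} - J"] by blast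

lemma dual_face_range: "J \<in> dual \<Longrightarrow> J \<subseteq> {1..m}"
  unfolding alexander_dual_def by blast

lemma empty_dual_face: "{} \<in> dual"
proof -
  have "{1..m} \<notin> K"
    using proper face_subset face_range unfolding full_simplex_def by blast
  then show ?thesis unfolding alexander_dual_def by simp
qed

lemma singleton_dual_face_or_face:
  assumes "a \<in> {1..m}" "\<tau> \<subseteq> {1..m} - {a}"
  shows "{a} \<in> dual \<or> \<tau> \<in> K"
proof (cases "{a} \<in> dual")
  case False
  then have "{1..m} - {a} \<in> K" using assms(1) unfolding alexander_dual_def by simp
  then show ?thesis using assms(2) face_subset by blast
qed simp

lemma singleton_face_or_dual_face:
  assumes "c \<in> {1..m}" "\<sigma> \<subseteq> {1..m} - {c}"
  shows "{c} \<in> K \<or> \<sigma> \<in> dual"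
proof (cases "{c} \<in> K")
  case False
  moreover have "{1..m} - ({1..m} - {c}) = {c}" using assms(1) by auto
  ultimately have "{1..m} - {c} \<in> dual" unfolding alexander_dual_def by auto
  then show ?thesis using assms(2) dual_face_subset by blast
qed simp

lemma adjacent_bier_Inl_Inl: "adjacent (bier m K) (Inl i) (Inl j) \<longleftrightarrow> i \<noteq> j \<and> {i, j} \<in> K"
  using Inl_Inr_mem_bier_iff[of "{i, j}" "{}" m K] empty_dual_face by (simp add: adjacent_def)

lemma adjacent_bier_Inr_Inr: "adjacent (bier m K) (Inr i) (Inr j) \<longleftrightarrow> i \<noteq> j \<and> {i, j} \<in> dual"
  using Inl_Inr_mem_bier_iff[of "{}" "{i, j}" m K] empty_face by (simp add: adjacent_def)

lemma adjacent_bier_Inl_Inr: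
  "adjacent (bier m K) (Inl i) (Inr j) \<longleftrightarrow> i \<noteq> j \<and> {i} \<in> K \<and> {j} \<in> dual"
proof -
  have "{Inl i, Inr j} = Inl ` {i} \<union> Inr ` {j}" by auto
  then show ?thesis
    using Inl_Inr_mem_bier_iff[of "{i}" "{j}" m K] by (auto simp: adjacent_def)
qed

lemma adjacent_bier_Inr_Inl:
  "adjacent (bier m K) (Inr j) (Inl i) \<longleftrightarrow> i \<noteq> j \<and> {i} \<in> K \<and> {j} \<in> dual"
  using adjacent_bier_Inl_Inr adjacent_commute by metis

lemma adjacent_bier_vertex:
  assumes "adjacent (bier m K) u v"
  shows "u \<in> Inl ` {1..m} \<union> Inr ` {1..m}"
proof -
  obtain I J where "u \<in> Inl ` I \<union> Inr ` J" "I \<in> K" "J \<in> dual"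
    using assms unfolding adjacent_def bier_def by blast
  then show ?thesis using face_range dual_face_range by blast
qed

lemmas adjacent_bier =
  adjacent_bier_Inl_Inl adjacent_bier_Inr_Inr adjacent_bier_Inl_Inr adjacent_bier_Inr_Inl

lemma split_clique_Inr_if_no_edges:
  assumes m: "4 \<le> m" and no_edges: "\<not> has_edge K"
  shows "split_clique (bier m K) (Inr ` {1..m})"
  unfolding split_clique_def
proof (intro conjI allI impI ballI)
  fix u v assume adj: "adjacent (bier m K) u v"
  then have "u \<in> Inl ` {1..m} \<union> Inr ` {1..m}" "v \<in> Inl ` {1..m} \<union> Inr ` {1..m}"
    using adjacent_bier_vertex adjacent_commute by metis+
  moreover have "\<not> (u \<in> Inl ` {1..m} \<and> v \<in> Inl ` {1..m})"
    using adj pair_notin_if_not_has_edge[OF no_edges] by (auto simp: adjacent_bier)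
  ultimately show "u \<in> Inr ` {1..m} \<or> v \<in> Inr ` {1..m}" by blast
next
  fix u v :: "nat + nat" assume "u \<in> Inr ` {1..m}" "v \<in> Inr ` {1..m}" "u \<noteq> v"
  then obtain i j where ij: "u = Inr i" "v = Inr j" "i \<noteq> j" "{i, j} \<subseteq> {1..m}" by blast
  obtain x y where "x \<noteq> y" "{x, y} \<subseteq> {1..m} - {i, j}"
    using two_points_outside_pair[OF m] by blast
  then have "{1..m} - {i, j} \<notin> K"
    using no_edges face_subset has_edge_iff by blast
  then have "{i, j} \<in> dual"
    using ij unfolding alexander_dual_def by auto
  then show "adjacent (bier m K) u v" using ij by (simp add: adjacent_bier)
qed

lemma split_clique_Inl_if_no_dual_edges:
  assumes m: "4 \<le> m" and no_edges: "\<not> has_edge dual"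
  shows "split_clique (bier m K) (Inl ` {1..m})"
  unfolding split_clique_def
proof (intro conjI allI impI ballI)
  fix u v assume adj: "adjacent (bier m K) u v"
  then have "u \<in> Inl ` {1..m} \<union> Inr ` {1..m}" "v \<in> Inl ` {1..m} \<union> Inr ` {1..m}"
    using adjacent_bier_vertex adjacent_commute by metis+
  moreover have "\<not> (u \<in> Inr ` {1..m} \<and> v \<in> Inr ` {1..m})"
    using adj pair_notin_if_not_has_edge[OF no_edges] by (auto simp: adjacent_bier)
  ultimately show "u \<in> Inl ` {1..m} \<or> v \<in> Inl ` {1..m}" by blast
next
  fix u v :: "nat + nat" assume "u \<in> Inl ` {1..m}" "v \<in> Inl ` {1..m}" "u \<noteq> v"
  then obtain i j where ij: "u = Inl i" "v = Inl j" "i \<noteq> j" "{i, j} \<subseteq> {1..m}" by blast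
  obtain x y where xy: "x \<noteq> y" "{x, y} \<subseteq> {1..m} - {i, j}"
    using two_points_outside_pair[OF m] by blast
  then have "{1..m} - {x, y} \<in> K"
    using no_edges has_edge_iff unfolding alexander_dual_def by blast
  moreover have "{i, j} \<subseteq> {1..m} - {x, y}" using ij xy by auto
  ultimately show "adjacent (bier m K) u v" using ij face_subset by (simp add: adjacent_bier)
qed

lemma not_chordal_if_common_edge:
  assumes "i \<noteq> j" "{i, j} \<in> K" "{i, j} \<in> dual"
  shows "\<not> chordal (bier m K)"
proof -
  have "{i} \<in> K" "{j} \<in> K" using assms(2) face_subset by auto
  moreover have "{i} \<in> dual" "{j} \<in> dual" using assms(3) dual_face_subset by auto
  ultimately show ?thesis
    using assms
    by (intro not_chordal_if_induced_square[of "Inl i" "Inl j" "Inr i" "Inr j"])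
      (simp_all add: adjacent_bier)
qed

lemma not_chordal_if_disjoint_edges:
  assumes no_common: "\<not> has_edge (K \<inter> dual)"
    and ab: "a \<noteq> b" "{a, b} \<in> K" and cd: "c \<noteq> d" "{c, d} \<in> dual"
    and disjoint: "{a, b} \<inter> {c, d} = {}"
  shows "\<not> chordal (bier m K)"
proof -
  have "{c, d} \<notin> K" "{a, b} \<notin> dual"
    using pair_notin_if_not_has_edge[OF no_common] ab cd by auto
  moreover have "{a, b} \<subseteq> {1..m}" "{c, d} \<subseteq> {1..m}"
    using face_range[OF ab(2)] dual_face_range[OF cd(2)] .
  ultimately have "{a} \<in> dual" "{b} \<in> dual" "{c} \<in> K" "{d} \<in> K"
    using disjoint singleton_dual_face_or_face[of _ "{c, d}"] singleton_face_or_dual_face[of _ "{a, b}"]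
    by auto
  with \<open>{c, d} \<notin> K\<close> \<open>{a, b} \<notin> dual\<close> show ?thesis
    using ab cd disjoint
    by (intro not_chordal_if_induced_square[of "Inl c" "Inr a" "Inl d" "Inr b"])
      (auto simp: adjacent_bier insert_commute)
qed

lemma not_chordal_if_edges_share_vertex:
  assumes m: "4 \<le> m" and no_common: "\<not> has_edge (K \<inter> dual)"
    and xy: "{x, y} \<in> K" and xz: "{x, z} \<in> dual" and distinct: "distinct [x, y, z]"
  shows "\<not> chordal (bier m K)"
proof -
  note not_common = pair_notin_if_not_has_edge[OF no_common]
  have range: "{x, y} \<subseteq> {1..m}" "{x, z} \<subseteq> {1..m}"
    using face_range[OF xy] dual_face_range[OF xz] .
  have xz_notin: "{x, z} \<notin> K" and xy_notin: "{x, y} \<notin> dual"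
    using not_common xy xz distinct by auto
  have "{y} \<in> dual"
    using singleton_dual_face_or_face[of y "{x, z}"] range distinct xz_notin by auto
  moreover have "{z} \<in> K"
    using singleton_face_or_dual_face[of z "{x, y}"] range distinct xy_notin by auto
  ultimately have singletons:
    "{x} \<in> K" "{y} \<in> K" "{z} \<in> K" "{x} \<in> dual" "{y} \<in> dual" "{z} \<in> dual"
    using xy xz face_subset dual_face_subset by auto
  consider "{y, z} \<in> K" | "{y, z} \<in> dual" | "{y, z} \<notin> K" "{y, z} \<notin> dual" by blast
  then show ?thesis
  proof cases
    case 1
    then show ?thesis
      using xy xz_notin singletons distinct
      by (intro not_chordal_if_induced_square[of "Inr y" "Inl x" "Inl y" "Inl z"])
        (auto simp: adjacent_bier)
  next
    case 2
    then show ?thesis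
      using xz xy_notin singletons distinct
      by (intro not_chordal_if_induced_square[of "Inl z" "Inr y" "Inr z" "Inr x"])
        (auto simp: adjacent_bier insert_commute)
  next
    case 3
    \<comment> \<open>Then the complement of yz is a face of K, so x spans an edge of K with a fourth vertex e.\<close>
    then have "{1..m} - {y, z} \<in> K"
      using range unfolding alexander_dual_def by auto
    moreover obtain e where e: "e \<in> {1..m} - {x, y, z}"
      using point_outside_triple[OF m] .
    ultimately have xe: "{x, e} \<in> K"
      using face_subset range distinct by auto
    then have eK: "{e} \<in> K" using face_subset by auto
    show ?thesis
    proof (cases "{y, e} \<in> K")
      case False
      then show ?thesis
        using xy xe eK singletons distinct e
        by (intro not_chordal_if_induced_square[of "Inr x" "Inl y" "Inl x" "Inl e"])
          (auto simp: adjacent_bier insert_commute)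
    next
      case True
      then have "{y, e} \<notin> dual" using not_common e by auto
      moreover have "{e} \<in> dual"
        using singleton_dual_face_or_face[of e "{x, z}"] e range xz_notin by auto
      ultimately show ?thesis
        using xz_notin singletons distinct e
        by (intro not_chordal_if_induced_square[of "Inl x" "Inr y" "Inl z" "Inr e"])
          (auto simp: adjacent_bier)
    qed
  qed
qed

lemma not_chordal_if_edges:
  assumes m: "4 \<le> m" and "has_edge K" "has_edge dual"
  shows "\<not> chordal (bier m K)"
proof (cases "has_edge (K \<inter> dual)")
  case True
  then obtain i j where "i \<noteq> j" "{i, j} \<in> K" "{i, j} \<in> dual"
    unfolding has_edge_iff by blast
  then show ?thesis by (rule not_chordal_if_common_edge)
next
  case no_common: False
  obtain a b c d where ab: "a \<noteq> b" "{a, b} \<in> K" and cd: "c \<noteq> d" "{c, d} \<in> dual"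
    using assms has_edge_iff by metis
  show ?thesis
  proof (cases "{a, b} \<inter> {c, d} = {}")
    case True
    then show ?thesis using not_chordal_if_disjoint_edges[OF no_common ab cd] by blast
  next
    case False
    then obtain x where "x \<in> {a, b}" "x \<in> {c, d}" by blast
    moreover obtain y where "{a, b} = {x, y}" "x \<noteq> y"
      using \<open>x \<in> {a, b}\<close> ab(1) by (metis insert_commute insertE singletonD)
    moreover obtain z where "{c, d} = {x, z}" "x \<noteq> z"
      using \<open>x \<in> {c, d}\<close> cd(1) by (metis insert_commute insertE singletonD)
    moreover have "y \<noteq> z"
      using calculation pair_notin_if_not_has_edge[OF no_common] ab cd by auto
    ultimately show ?thesis
      using not_chordal_if_edges_share_vertex[OF m no_common] ab cd by auto
  qed
qed

end

theorem mainTheorem14: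
  fixes m :: nat and K :: "nat set set"
  assumes "m \<ge> 4"
    and "simplicial_complex m K"
    and "K \<noteq> full_simplex m"
  shows "chordal (bier m K) \<longleftrightarrow>
           (\<not> has_edge K \<or> \<not> has_edge (alexander_dual m K))"
proof -
  interpret proper_complex m K
    using assms(2,3) by unfold_locales
  show ?thesis
  proof
    assume "chordal (bier m K)"
    then show "\<not> has_edge K \<or> \<not> has_edge dual"
      using not_chordal_if_edges[OF assms(1)] by blast
  next
    assume "\<not> has_edge K \<or> \<not> has_edge dual"
    then show "chordal (bier m K)"
      using split_clique_Inr_if_no_edges[OF assms(1)] split_clique_Inl_if_no_dual_edges[OF assms(1)]
      by (auto intro: chordal_if_split_clique)
  qed
qed

end
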